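(* Fix a finite relational schema $\sigma$ and an integer $d\geq 2$, let $\mathbf{C}$ be a class of $\sigma$-databases of degree at most $d$ closed under removing tuples, and let $\mathbf{P}\subseteq\mathbf{C}$ be a property that is hyperfinite on $\mathbf{C}$. Let $\epsilon\in(0,1]$, and let $r\in\mathbb{N}$ and $\lambda\in(0,1]$ be such that for every $\mathcal{D}\in\mathbf{P}$ and $\mathcal{D}'\in\mathbf{C}$, if $\|\operatorname{h}_r(\mathcal{D})-\operatorname{h}_r(\mathcal{D}')\|_1\leq\lambda\min\{|D|,|D'|\}$ then $\mathcal{D}'$ is $\epsilon$-close to $\mathbf{P}$ in the $\operatorname{BDRD}_{+/-}$ model. Suppose the set $\operatorname{h}_r(\mathbf{P})$ is semilinear. Then there exist $n_{\min},n_{\max}\in\mathbb{N}$ and $f,\mu\in(0,1)$ such that for every $\mathcal{D}\in\mathbf{C}$ with $|D|>n_{\max}$: (1) if $\mathcal{D}\in\mathbf{P}$, then there exists $\mathcal{D}'\in\mathbf{P}$ with $n_{\min}\leq|D'|\leq n_{\max}$ and $\|\operatorname{dv}_r(\mathcal{D})-\operatorname{dv}_r(\mathcal{D}')\|_1\leq f-\mu$; and (2) if $\mathcal{D}$ is $\epsilon$-far from $\mathbf{P}$ in the $\operatorname{BDRD}_{+/-}$ model, then every $\mathcal{D}'\in\mathbf{P}$ with $n_{\min}\leq|D'|\leq n_{\max}$ satisfies $\|\operatorname{dv}_r(\mathcal{D})-\operatorname{dv}_r(\mathcal{D}')\|_1>f+\mu$.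
   Context: A schema $\sigma$ is a finite set of relation names with arities in $\mathbb{N}_{\geq 1}$. A $\sigma$-database $\mathcal{D}$ has a finite domain $D$ and a relation $R^{\mathcal{D}}\subseteq D^{\operatorname{ar}(R)}$ for each $R\in\sigma$. The Gaifman graph of $\mathcal{D}$ has vertex set $D$ and an edge between distinct $a,b$ whenever some tuple contains both; distances and connected components refer to it. The degree of an element is the number of tuples containing it; the degree of $\mathcal{D}$ is the maximum. Classes are closed under isomorphism; a property is an isomorphism-closed class. Hyperfinite: an $(\epsilon,k)$-partition of $\mathcal{D}$ on $n$ elements is obtained by removing at most $\epsilon n$ tuples so that every connected component has at most $k$ elements; $\mathbf{P}\subseteq\mathbf{C}$ is hyperfinite on $\mathbf{C}$ if there is a function $\rho$ such that for every $\epsilon\in(0,1]$ and $\mathcal{D}\in\mathbf{P}$ some $(\epsilon,\rho(\epsilon))$-partition of $\mathcal{D}$ lies in $\mathbf{C}$. Neighbourhoods: $N_r(a)$ is the set of elements at distance at most $r$ from $a$; the $r$-neighbourhood of $a$ is $(\mathcal{D}[N_r(a)],a)$; an $r$-type is a centre-preserving isomorphism class of $r$-neighbourhoods; $\operatorname{c}(r)$ is the (finite) number of $r$-types of degree at most $d$ over $\sigma$. $\operatorname{h}_r(\mathcal{D})\in\mathbb{N}^{\operatorname{c}(r)}$ counts the elements of each $r$-type; $\operatorname{dv}_r(\mathcal{D})=\operatorname{h}_r(\mathcal{D})/|D|$; $\operatorname{h}_r(\mathbf{P})=\{\operatorname{h}_r(\mathcal{D})\mid\mathcal{D}\in\mathbf{P}\}$.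 A set $M\subseteq\mathbb{N}^c$ is linear if $M=\{\bar v_0+a_1\bar v_1+\dots+a_k\bar v_k\mid a_i\in\mathbb{N}\}$ for some $\bar v_j\in\mathbb{N}^c$, and semilinear if it is a finite union of linear sets. $\operatorname{BDRD}_{+/-}$ model: $\operatorname{dist}_{+/-}(\mathcal{D},\mathcal{D}')$ is the minimum number of modifications (inserting an element, deleting an element together with all tuples containing it, inserting a tuple, deleting a tuple) applied to $\mathcal{D}$ and $\mathcal{D}'$ to make them isomorphic; they are $\epsilon$-close if $\operatorname{dist}_{+/-}(\mathcal{D},\mathcal{D}')\leq\epsilon d\min\{|D|,|D'|\}$, else $\epsilon$-far; $\mathcal{D}$ is $\epsilon$-close to $\mathbf{P}$ if it is $\epsilon$-close to some member of $\mathbf{P}$, else $\epsilon$-far from $\mathbf{P}$. *)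

theory Defs
  imports Complex_Main
begin

datatype ('r, 'a) db = DB (dom: "'a set") (rel: "'r \<Rightarrow> 'a list set")

definition is_db :: "'r set \<Rightarrow> ('r \<Rightarrow> nat) \<Rightarrow> ('r, 'a) db \<Rightarrow> bool" where
  "is_db \<sigma> ar D \<longleftrightarrow> finite (dom D) \<and> (\<forall>R. R \<notin> \<sigma> \<longrightarrow> rel D R = {}) \<and>
     (\<forall>R\<in>\<sigma>. \<forall>t\<in>rel D R. length t = ar R \<and> set t \<subseteq> dom D)"

definition tuples :: "('r, 'a) db \<Rightarrow> ('r \<times> 'a list) set" where
  "tuples D = {(R, t). t \<in> rel D R}"

definition elem_deg :: "('r, 'a) db \<Rightarrow> 'a \<Rightarrow> nat" where
  "elem_deg D a = card {(R, t). t \<in> rel D R \<and> a \<in> set t}"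

definition deg_le :: "('r, 'a) db \<Rightarrow> nat \<Rightarrow> bool" where
  "deg_le D d \<longleftrightarrow> (\<forall>a\<in>dom D. elem_deg D a \<le> d)"

definition gadj :: "('r, 'a) db \<Rightarrow> 'a \<Rightarrow> 'a \<Rightarrow> bool" where
  "gadj D a b \<longleftrightarrow> a \<noteq> b \<and> (\<exists>R t. t \<in> rel D R \<and> a \<in> set t \<and> b \<in> set t)"

fun nbh :: "('r, 'a) db \<Rightarrow> nat \<Rightarrow> 'a \<Rightarrow> 'a set" where
  "nbh D 0 a = {a}"
| "nbh D (Suc r) a = nbh D r a \<union> {b. \<exists>c\<in>nbh D r a. gadj D c b}"

definition induced :: "('r, 'a) db \<Rightarrow> 'a set \<Rightarrow> ('r, 'a) db" where
  "induced D S = DB S (\<lambda>R. {t \<in> rel D R. set t \<subseteq> S})"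

definition iso_map :: "('a \<Rightarrow> 'b) \<Rightarrow> ('r, 'a) db \<Rightarrow> ('r, 'b) db \<Rightarrow> bool" where
  "iso_map f D E \<longleftrightarrow> bij_betw f (dom D) (dom E) \<and> (\<forall>R. rel E R = map f ` rel D R)"

definition isomorphic :: "('r, 'a) db \<Rightarrow> ('r, 'b) db \<Rightarrow> bool" where
  "isomorphic D E \<longleftrightarrow> (\<exists>f. iso_map f D E)"

text \<open>The r-type of a in D: the centre-preserving isomorphism class of its r-neighbourhood,
  represented as the set of all rooted sigma-databases over nat isomorphic to it.\<close>
definition rtype :: "'r set \<Rightarrow> ('r \<Rightarrow> nat) \<Rightarrow> nat \<Rightarrow> ('r, 'a) db \<Rightarrow> 'a \<Rightarrow> (('r, nat) db \<times> nat) set" where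
  "rtype \<sigma> ar r D a = {(B, b). is_db \<sigma> ar B \<and>
      (\<exists>f. iso_map f (induced D (nbh D r a)) B \<and> f a = b)}"

text \<open>The (finite) set of r-types of degree at most d over sigma; it plays the role of the
  index set {1..c(r)}.\<close>
definition rtypes :: "'r set \<Rightarrow> ('r \<Rightarrow> nat) \<Rightarrow> nat \<Rightarrow> nat \<Rightarrow> (('r, nat) db \<times> nat) set set" where
  "rtypes \<sigma> ar d r = {rtype \<sigma> ar r B b | (B :: (_, nat) db) b. is_db \<sigma> ar B \<and> deg_le B d \<and> b \<in> dom B}"

definition hist :: "'r set \<Rightarrow> ('r \<Rightarrow> nat) \<Rightarrow> nat \<Rightarrow> ('r, 'a) db \<Rightarrow> (('r, nat) db \<times> nat) set \<Rightarrow> nat" where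
  "hist \<sigma> ar r D = (\<lambda>\<tau>. card {a \<in> dom D. rtype \<sigma> ar r D a = \<tau>})"

definition hist_dist :: "'r set \<Rightarrow> ('r \<Rightarrow> nat) \<Rightarrow> nat \<Rightarrow> nat \<Rightarrow> ('r, 'a) db \<Rightarrow> ('r, 'b) db \<Rightarrow> real" where
  "hist_dist \<sigma> ar d r D D' =
     (\<Sum>\<tau>\<in>rtypes \<sigma> ar d r. \<bar>real (hist \<sigma> ar r D \<tau>) - real (hist \<sigma> ar r D' \<tau>)\<bar>)"

definition dv_dist :: "'r set \<Rightarrow> ('r \<Rightarrow> nat) \<Rightarrow> nat \<Rightarrow> nat \<Rightarrow> ('r, 'a) db \<Rightarrow> ('r, 'b) db \<Rightarrow> real" where
  "dv_dist \<sigma> ar d r D D' =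
     (\<Sum>\<tau>\<in>rtypes \<sigma> ar d r. \<bar>real (hist \<sigma> ar r D \<tau>) / real (card (dom D))
                              - real (hist \<sigma> ar r D' \<tau>) / real (card (dom D'))\<bar>)"

definition linear_set :: "'i set \<Rightarrow> ('i \<Rightarrow> nat) set \<Rightarrow> bool" where
  "linear_set I M \<longleftrightarrow> (\<exists>v0 vs. (\<forall>v\<in>set (v0 # vs). \<forall>i. i \<notin> I \<longrightarrow> v i = 0) \<and>
     M = {(\<lambda>i. v0 i + (\<Sum>j<length vs. a j * (vs ! j) i)) | a :: nat \<Rightarrow> nat. True})"

definition semilinear :: "'i set \<Rightarrow> ('i \<Rightarrow> nat) set \<Rightarrow> bool" where
  "semilinear I M \<longleftrightarrow> (\<exists>Ls. finite Ls \<and> (\<forall>L\<in>Ls. linear_set I L) \<and> M = \<Union> Ls)"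

definition mod_step :: "'r set \<Rightarrow> ('r \<Rightarrow> nat) \<Rightarrow> ('r, 'a) db \<Rightarrow> ('r, 'a) db \<Rightarrow> bool" where
  "mod_step \<sigma> ar D E \<longleftrightarrow>
     (\<exists>x. x \<notin> dom D \<and> E = DB (insert x (dom D)) (rel D)) \<or>
     (\<exists>x\<in>dom D. E = DB (dom D - {x}) (\<lambda>R. {t \<in> rel D R. x \<notin> set t})) \<or>
     (\<exists>R\<in>\<sigma>. \<exists>t. length t = ar R \<and> set t \<subseteq> dom D \<and> t \<notin> rel D R \<and>
         E = DB (dom D) ((rel D)(R := insert t (rel D R)))) \<or>
     (\<exists>R t. t \<in> rel D R \<and> E = DB (dom D) ((rel D)(R := rel D R - {t})))"

definition dist_pm :: "'r set \<Rightarrow> ('r \<Rightarrow> nat) \<Rightarrow> ('r, 'a) db \<Rightarrow> ('r, 'a) db \<Rightarrow> nat" where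
  "dist_pm \<sigma> ar D D' = (LEAST k. \<exists>k1 k2 E E'. k = k1 + k2 \<and>
      (mod_step \<sigma> ar ^^ k1) D E \<and> (mod_step \<sigma> ar ^^ k2) D' E' \<and> isomorphic E E')"

definition eps_close :: "'r set \<Rightarrow> ('r \<Rightarrow> nat) \<Rightarrow> nat \<Rightarrow> real \<Rightarrow> ('r, 'a) db \<Rightarrow> ('r, 'a) db \<Rightarrow> bool" where
  "eps_close \<sigma> ar d \<epsilon> D D' \<longleftrightarrow>
     real (dist_pm \<sigma> ar D D') \<le> \<epsilon> * real d * real (min (card (dom D)) (card (dom D')))"

definition close_to :: "'r set \<Rightarrow> ('r \<Rightarrow> nat) \<Rightarrow> nat \<Rightarrow> real \<Rightarrow> ('r, 'a) db \<Rightarrow> ('r, 'a) db set \<Rightarrow> bool" where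
  "close_to \<sigma> ar d \<epsilon> D P \<longleftrightarrow> (\<exists>D'\<in>P. eps_close \<sigma> ar d \<epsilon> D D')"

definition far_from :: "'r set \<Rightarrow> ('r \<Rightarrow> nat) \<Rightarrow> nat \<Rightarrow> real \<Rightarrow> ('r, 'a) db \<Rightarrow> ('r, 'a) db set \<Rightarrow> bool" where
  "far_from \<sigma> ar d \<epsilon> D P \<longleftrightarrow> \<not> close_to \<sigma> ar d \<epsilon> D P"

definition iso_closed :: "'r set \<Rightarrow> ('r \<Rightarrow> nat) \<Rightarrow> ('r, 'a) db set \<Rightarrow> bool" where
  "iso_closed \<sigma> ar K \<longleftrightarrow> (\<forall>D E. D \<in> K \<longrightarrow> is_db \<sigma> ar E \<longrightarrow> isomorphic D E \<longrightarrow> E \<in> K)"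

definition closed_remove_tuples :: "('r, 'a) db set \<Rightarrow> bool" where
  "closed_remove_tuples K \<longleftrightarrow>
     (\<forall>D\<in>K. \<forall>E. dom E = dom D \<and> (\<forall>R. rel E R \<subseteq> rel D R) \<longrightarrow> E \<in> K)"

definition component :: "('r, 'a) db \<Rightarrow> 'a \<Rightarrow> 'a set" where
  "component D a = {b \<in> dom D. (gadj D)\<^sup>*\<^sup>* a b}"

definition is_partition :: "real \<Rightarrow> nat \<Rightarrow> ('r, 'a) db \<Rightarrow> ('r, 'a) db \<Rightarrow> bool" where
  "is_partition \<epsilon> k D D' \<longleftrightarrow> dom D' = dom D \<and> (\<forall>R. rel D' R \<subseteq> rel D R) \<and>
     real (card (tuples D - tuples D')) \<le> \<epsilon> * real (card (dom D)) \<and>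
     (\<forall>a\<in>dom D'. card (component D' a) \<le> k)"

definition hyperfinite_on :: "('r, 'a) db set \<Rightarrow> ('r, 'a) db set \<Rightarrow> bool" where
  "hyperfinite_on P C \<longleftrightarrow> (\<exists>\<rho> :: real \<Rightarrow> nat. \<forall>\<epsilon>. 0 < \<epsilon> \<and> \<epsilon> \<le> 1 \<longrightarrow>
     (\<forall>D\<in>P. \<exists>D'. is_partition \<epsilon> (\<rho> \<epsilon>) D D' \<and> D' \<in> C))"

end

theory Submission
  imports Defs "HOL-Library.FuncSet"
begin

text \<open>
  Semilinearity of h_r(P) enters only through one consequence: the histogram of a member of P
  can be multiplied by any q \<ge> 1 and rounded back into h_r(P) (round the period coefficients
  of a linear set down) at l1-cost at most q c, for a constant c.

  Take f = \<lambda>/4 and \<mu> = \<lambda>/8. If D is \<epsilon>-far from P and D' \<in> P has at least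
  n_min \<approx> 8c/\<lambda> elements, rescaling h_r(D') to the size of D gives D'' \<in> P whose
  histogram is within \<lambda>|D|/8 of |D| dv_r(D'). Were dv_r(D) and dv_r(D') 3\<lambda>/8-close,
  h_r(D'') and h_r(D) would be \<lambda>-close, and the hypothesis would make D \<epsilon>-close to P.
  For n_max: distribution vectors lie in the unit cube indexed by the r-types, which is totally
  bounded in l1, so finitely many members of P of size \<ge> n_min form a \<lambda>/8-net of all of
  them, and n_max bounds their sizes.
\<close>

lemma rounded_combination_error:
  fixes v :: nat and w a b :: "nat \<Rightarrow> nat" and q :: real
  assumes "1 \<le> q" and "\<And>j. j < n \<Longrightarrow> \<bar>real (b j) - q * real (a j)\<bar> \<le> 1"
  shows "\<bar>real (v + (\<Sum>j<n. b j * w j)) - q * real (v + (\<Sum>j<n. a j * w j))\<bar>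
           \<le> q * real (v + (\<Sum>j<n. w j))"
proof -
  have "real (v + (\<Sum>j<n. b j * w j)) - q * real (v + (\<Sum>j<n. a j * w j))
      = (1 - q) * real v + (\<Sum>j<n. (real (b j) - q * real (a j)) * real (w j))"
    by (simp add: algebra_simps sum_distrib_left sum_subtractf)
  also have "\<bar>\<dots>\<bar> \<le> \<bar>(1 - q) * real v\<bar> + (\<Sum>j<n. \<bar>(real (b j) - q * real (a j)) * real (w j)\<bar>)"
    by (rule order_trans[OF abs_triangle_ineq add_left_mono[OF sum_abs]])
  also have "\<dots> \<le> q * real v + (\<Sum>j<n. real (w j))"
  proof (rule add_mono)
    show "\<bar>(1 - q) * real v\<bar> \<le> q * real v"
      using assms(1) by (simp add: abs_mult mult_right_mono)
    show "(\<Sum>j<n. \<bar>(real (b j) - q * real (a j)) * real (w j)\<bar>) \<le> (\<Sum>j<n. real (w j))"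
      using assms(2) by (intro sum_mono) (simp add: abs_mult mult_left_le_one_le)
  qed
  also have "\<dots> \<le> q * real (v + (\<Sum>j<n. w j))"
    using mult_right_mono[OF assms(1), of "\<Sum>j<n. real (w j)"]
    by (simp add: distrib_left sum_nonneg)
  finally show ?thesis .
qed

definition approx_scaling_closed :: "'i set \<Rightarrow> real \<Rightarrow> ('i \<Rightarrow> nat) set \<Rightarrow> bool" where
  "approx_scaling_closed I c M \<longleftrightarrow>
     (\<forall>h\<in>M. \<forall>q\<ge>1. \<exists>h'\<in>M. (\<Sum>i\<in>I. \<bar>real (h' i) - q * real (h i)\<bar>) \<le> q * c)"

lemma approx_scaling_closed_mono:
  "approx_scaling_closed I c M \<Longrightarrow> c \<le> c' \<Longrightarrow> approx_scaling_closed I c' M"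
  unfolding approx_scaling_closed_def by (meson mult_left_mono order.trans zero_le_one)

lemma approx_scaling_closed_Union:
  "(\<And>L. L \<in> Ls \<Longrightarrow> approx_scaling_closed I c L) \<Longrightarrow> approx_scaling_closed I c (\<Union>Ls)"
  unfolding approx_scaling_closed_def by blast

lemma linear_set_approx_scaling_closed:
  assumes "linear_set I L"
  shows "\<exists>c\<ge>0. approx_scaling_closed I c L"
proof -
  obtain v0 vs where L: "L = {(\<lambda>i. v0 i + (\<Sum>j<length vs. a j * (vs ! j) i)) | a :: nat \<Rightarrow> nat. True}"
    using assms unfolding linear_set_def by blast
  define c where "c = real (\<Sum>i\<in>I. v0 i + (\<Sum>j<length vs. (vs ! j) i))"
  have "approx_scaling_closed I c L"
    unfolding approx_scaling_closed_def
  proof (intro ballI allI impI)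
    fix h and q :: real
    assume "h \<in> L" and q: "1 \<le> q"
    then obtain a where h: "h = (\<lambda>i. v0 i + (\<Sum>j<length vs. a j * (vs ! j) i))"
      using L by blast
    define b where "b j = nat \<lfloor>q * real (a j)\<rfloor>" for j
    have b: "\<bar>real (b j) - q * real (a j)\<bar> \<le> 1" for j
      using q unfolding b_def by (simp add: abs_le_iff) linarith
    define h' where "h' = (\<lambda>i. v0 i + (\<Sum>j<length vs. b j * (vs ! j) i))"
    have "h' \<in> L"
      unfolding h'_def L by blast
    moreover have "(\<Sum>i\<in>I. \<bar>real (h' i) - q * real (h i)\<bar>) \<le> q * c"
      unfolding c_def of_nat_sum sum_distrib_left h h'_def
      by (intro sum_mono rounded_combination_error[OF q b])
    ultimately show "\<exists>h'\<in>L. (\<Sum>i\<in>I. \<bar>real (h' i) - q * real (h i)\<bar>) \<le> q * c"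
      by blast
  qed
  moreover have "0 \<le> c"
    unfolding c_def by (rule of_nat_0_le_iff)
  ultimately show ?thesis
    by blast
qed

lemma semilinear_approx_scaling_closed:
  assumes "semilinear I M"
  shows "\<exists>c\<ge>0. approx_scaling_closed I c M"
proof -
  obtain Ls where Ls: "finite Ls" "\<forall>L\<in>Ls. linear_set I L" "M = \<Union>Ls"
    using assms unfolding semilinear_def by blast
  then obtain cL where cL: "\<forall>L\<in>Ls. 0 \<le> cL L \<and> approx_scaling_closed I (cL L) L"
    using linear_set_approx_scaling_closed by metis
  have "approx_scaling_closed I (\<Sum>L\<in>Ls. cL L) L" if "L \<in> Ls" for L
  proof (rule approx_scaling_closed_mono)
    show "approx_scaling_closed I (cL L) L"
      using cL that by blast
    show "cL L \<le> (\<Sum>L\<in>Ls. cL L)"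
      using cL that Ls(1) by (intro member_le_sum) auto
  qed
  then have "approx_scaling_closed I (\<Sum>L\<in>Ls. cL L) M"
    unfolding Ls(3) by (rule approx_scaling_closed_Union)
  moreover have "0 \<le> (\<Sum>L\<in>Ls. cL L)"
    using cL by (simp add: sum_nonneg)
  ultimately show ?thesis
    by blast
qed

lemma abs_diff_le_if_floor_mult_eq:
  fixes K x y :: real
  assumes "0 < K" and "\<lfloor>K * x\<rfloor> = \<lfloor>K * y\<rfloor>"
  shows "\<bar>x - y\<bar> \<le> 1 / K"
proof -
  have "\<bar>K * x - K * y\<bar> < 1"
    using assms(2) by linarith
  then have "K * \<bar>x - y\<bar> < 1"
    using assms(1) by (simp add: abs_mult flip: right_diff_distrib)
  then show ?thesis
    using assms(1) by (simp add: field_simps)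
qed

lemma finite_l1_net:
  fixes x :: "'a \<Rightarrow> 'i \<Rightarrow> real"
  assumes "finite I" and "0 < \<delta>" and "\<And>a i. a \<in> S \<Longrightarrow> i \<in> I \<Longrightarrow> 0 \<le> x a i \<and> x a i \<le> 1"
  obtains R where "finite R" and "R \<subseteq> S" and "\<And>a. a \<in> S \<Longrightarrow> \<exists>b\<in>R. (\<Sum>i\<in>I. \<bar>x a i - x b i\<bar>) \<le> \<delta>"
proof -
  define K where "K = (real (card I) + 1) / \<delta>"
  have K: "0 < K" "real (card I) / K \<le> \<delta>"
    using assms(2) unfolding K_def by (simp_all add: field_simps)
  define cell where "cell a = (\<lambda>i\<in>I. \<lfloor>K * x a i\<rfloor>)" for a
  have "cell a \<in> (\<Pi>\<^sub>E i\<in>I. {0..\<lfloor>K\<rfloor>})" if "a \<in> S" for a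
  proof -
    have "0 \<le> K * x a i \<and> K * x a i \<le> K" if "i \<in> I" for i
      using assms(3)[OF \<open>a \<in> S\<close> that] K(1) by (simp add: mult_left_le)
    then show ?thesis
      unfolding cell_def by (simp add: floor_mono)
  qed
  then have "cell ` S \<subseteq> (\<Pi>\<^sub>E i\<in>I. {0..\<lfloor>K\<rfloor>})"
    by blast
  then have finite_cells: "finite (cell ` S)"
    by (rule finite_subset) (simp add: assms(1) finite_PiE)
  have same_cell_close: "(\<Sum>i\<in>I. \<bar>x a i - x b i\<bar>) \<le> \<delta>" if "cell a = cell b" for a b
  proof -
    have "\<bar>x a i - x b i\<bar> \<le> 1 / K" if "i \<in> I" for i
      using \<open>cell a = cell b\<close> that K(1) unfolding cell_def
      by (intro abs_diff_le_if_floor_mult_eq) (metis restrict_apply')+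
    then have "(\<Sum>i\<in>I. \<bar>x a i - x b i\<bar>) \<le> real (card I) / K"
      using sum_mono[of I "\<lambda>i. \<bar>x a i - x b i\<bar>" "\<lambda>_. 1 / K"] by simp
    then show ?thesis
      using K(2) by linarith
  qed
  show thesis
  proof
    show "finite (inv_into S cell ` cell ` S)"
      using finite_cells by simp
    show "inv_into S cell ` cell ` S \<subseteq> S"
      by (auto intro: inv_into_into)
    show "\<exists>b\<in>inv_into S cell ` cell ` S. (\<Sum>i\<in>I. \<bar>x a i - x b i\<bar>) \<le> \<delta>" if "a \<in> S" for a
    proof
      show "inv_into S cell (cell a) \<in> inv_into S cell ` cell ` S"
        using that by blast
      show "(\<Sum>i\<in>I. \<bar>x a i - x (inv_into S cell (cell a)) i\<bar>) \<le> \<delta>"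
        using that by (intro same_cell_close) (simp add: f_inv_into_f)
    qed
  qed
qed

lemma hist_le_card:
  assumes "finite (dom D)"
  shows "hist \<sigma> ar r D \<tau> \<le> card (dom D)"
  unfolding hist_def using assms by (intro card_mono) auto

lemma card_eq_sum_hist:
  fixes D :: "('r, nat) db"
  assumes "finite (rtypes \<sigma> ar d r)" "is_db \<sigma> ar D" "deg_le D d"
  shows "card (dom D) = (\<Sum>\<tau>\<in>rtypes \<sigma> ar d r. hist \<sigma> ar r D \<tau>)"
proof -
  have "finite (dom D)"
    using assms(2) by (simp add: is_db_def)
  moreover have "rtype \<sigma> ar r D ` dom D \<subseteq> rtypes \<sigma> ar d r"
    using assms(2,3) unfolding rtypes_def by blast
  ultimately show ?thesis
    using sum_fun_comp[where f = "\<lambda>_. 1 :: nat", OF _ assms(1)]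
    by (simp add: hist_def)
qed

lemma dv_dist_net_of_bounded_size:
  fixes P :: "('r, 'a) db set"
  assumes "finite (rtypes \<sigma> ar d r)" and "0 < \<delta>" and "0 < n_min" and "\<forall>D\<in>P. finite (dom D)"
  obtains n_max where "n_min \<le> n_max"
    and "\<And>D. D \<in> P \<Longrightarrow> n_min \<le> card (dom D) \<Longrightarrow>
           \<exists>D'\<in>P. n_min \<le> card (dom D') \<and> card (dom D') \<le> n_max \<and> dv_dist \<sigma> ar d r D D' \<le> \<delta>"
proof -
  define S where "S = {D \<in> P. n_min \<le> card (dom D)}"
  define x where "x (D :: ('r, 'a) db) \<tau> = real (hist \<sigma> ar r D \<tau>) / real (card (dom D))" for D \<tau>
  have x_bounds: "0 \<le> x D \<tau> \<and> x D \<tau> \<le> 1" if "D \<in> S" for D \<tau>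
    using that assms(3,4) hist_le_card[of D \<sigma> ar r \<tau>] unfolding S_def x_def
    by (simp add: divide_le_eq_1)
  obtain R where "finite R" and "R \<subseteq> S"
    and net: "\<And>D. D \<in> S \<Longrightarrow> \<exists>D'\<in>R. (\<Sum>\<tau>\<in>rtypes \<sigma> ar d r. \<bar>x D \<tau> - x D' \<tau>\<bar>) \<le> \<delta>"
    using finite_l1_net[OF assms(1,2), of S x] x_bounds by blast
  define n_max where "n_max = Max (insert n_min ((\<lambda>D. card (dom D)) ` R))"
  show thesis
  proof
    show "n_min \<le> n_max"
      unfolding n_max_def using \<open>finite R\<close> by simp
    fix D assume "D \<in> P" and "n_min \<le> card (dom D)"
    then obtain D' where "D' \<in> R" and "dv_dist \<sigma> ar d r D D' \<le> \<delta>"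
      using net unfolding S_def x_def dv_dist_def by blast
    moreover have "card (dom D') \<le> n_max"
      unfolding n_max_def using \<open>finite R\<close> \<open>D' \<in> R\<close> by simp
    ultimately show "\<exists>D'\<in>P. n_min \<le> card (dom D') \<and> card (dom D') \<le> n_max \<and> dv_dist \<sigma> ar d r D D' \<le> \<delta>"
      using \<open>R \<subseteq> S\<close> unfolding S_def by blast
  qed
qed

lemma hist_dist_le_rescaled:
  assumes "0 < card (dom D)" and "0 < card (dom D')"
  defines "q \<equiv> real (card (dom D)) / real (card (dom D'))"
  shows "hist_dist \<sigma> ar d r D'' D
           \<le> (\<Sum>\<tau>\<in>rtypes \<sigma> ar d r. \<bar>real (hist \<sigma> ar r D'' \<tau>) - q * real (hist \<sigma> ar r D' \<tau>)\<bar>)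
             + real (card (dom D)) * dv_dist \<sigma> ar d r D D'"
proof -
  let ?N = "real (card (dom D))" and ?N' = "real (card (dom D'))"
  have rescaled: "\<bar>q * real (hist \<sigma> ar r D' \<tau>) - real (hist \<sigma> ar r D \<tau>)\<bar>
      = ?N * \<bar>real (hist \<sigma> ar r D \<tau>) / ?N - real (hist \<sigma> ar r D' \<tau>) / ?N'\<bar>" for \<tau>
  proof -
    have "q * real (hist \<sigma> ar r D' \<tau>) - real (hist \<sigma> ar r D \<tau>)
        = - (?N * (real (hist \<sigma> ar r D \<tau>) / ?N - real (hist \<sigma> ar r D' \<tau>) / ?N'))"
      using assms(1,2) unfolding q_def by (simp add: field_simps)
    then show ?thesis
      by (simp add: abs_mult)
  qed
  have "hist_dist \<sigma> ar d r D'' D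
      \<le> (\<Sum>\<tau>\<in>rtypes \<sigma> ar d r. \<bar>real (hist \<sigma> ar r D'' \<tau>) - q * real (hist \<sigma> ar r D' \<tau>)\<bar>
             + ?N * \<bar>real (hist \<sigma> ar r D \<tau>) / ?N - real (hist \<sigma> ar r D' \<tau>) / ?N'\<bar>)"
    unfolding hist_dist_def rescaled[symmetric] by (intro sum_mono) arith
  then show ?thesis
    by (simp add: sum.distrib dv_dist_def sum_distrib_left)
qed

lemma exists_rescaled_member:
  fixes C P :: "('r, nat) db set" and D D' :: "('r, nat) db"
  assumes "finite (rtypes \<sigma> ar d r)" and "\<forall>D\<in>C. is_db \<sigma> ar D \<and> deg_le D d" and "P \<subseteq> C"
    and "approx_scaling_closed (rtypes \<sigma> ar d r) c (hist \<sigma> ar r ` P)"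
    and "D \<in> C" and "D' \<in> P" and "0 < card (dom D')" and "card (dom D') \<le> card (dom D)"
  obtains D'' E where "D'' \<in> P" and "0 \<le> E"
    and "E \<le> real (card (dom D)) / real (card (dom D')) * c"
    and "hist_dist \<sigma> ar d r D'' D \<le> E + real (card (dom D)) * dv_dist \<sigma> ar d r D D'"
    and "real (card (dom D)) - E \<le> real (min (card (dom D'')) (card (dom D)))"
proof -
  define I where "I = rtypes \<sigma> ar d r"
  define q where "q = real (card (dom D)) / real (card (dom D'))"
  have "1 \<le> q"
    using assms(7,8) unfolding q_def by simp
  then obtain D'' where "D'' \<in> P"
    and E_le: "(\<Sum>\<tau>\<in>I. \<bar>real (hist \<sigma> ar r D'' \<tau>) - q * real (hist \<sigma> ar r D' \<tau>)\<bar>) \<le> q * c"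
    using assms(4,6) unfolding approx_scaling_closed_def I_def by blast
  define E where "E = (\<Sum>\<tau>\<in>I. \<bar>real (hist \<sigma> ar r D'' \<tau>) - q * real (hist \<sigma> ar r D' \<tau>)\<bar>)"
  have "0 \<le> E"
    unfolding E_def by (simp add: sum_nonneg)
  have card_sum: "card (dom B) = (\<Sum>\<tau>\<in>I. hist \<sigma> ar r B \<tau>)" if "B \<in> C" for B
    using card_eq_sum_hist assms(1,2) that unfolding I_def by blast
  have "real (card (dom D)) = q * real (card (dom D'))"
    using assms(7) unfolding q_def by simp
  also have "\<dots> = (\<Sum>\<tau>\<in>I. q * real (hist \<sigma> ar r D' \<tau>))"
    using card_sum[of D'] assms(3,6) by (simp add: subset_iff sum_distrib_left)
  also have "\<dots> \<le> (\<Sum>\<tau>\<in>I. real (hist \<sigma> ar r D'' \<tau>)) + E"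
    unfolding E_def sum.distrib[symmetric] by (intro sum_mono) linarith
  also have "\<dots> = real (card (dom D'')) + E"
    using card_sum[of D''] assms(3) \<open>D'' \<in> P\<close> by auto
  finally have "real (card (dom D)) - E \<le> real (min (card (dom D'')) (card (dom D)))"
    using \<open>0 \<le> E\<close> by simp
  moreover have "hist_dist \<sigma> ar d r D'' D \<le> E + real (card (dom D)) * dv_dist \<sigma> ar d r D D'"
    using hist_dist_le_rescaled[of D D' \<sigma> ar d r D''] assms(7,8)
    unfolding E_def I_def q_def by simp
  ultimately show thesis
    using that \<open>D'' \<in> P\<close> \<open>0 \<le> E\<close> E_le unfolding E_def q_def by blast
qed

lemma dv_dist_gt_if_far:
  fixes C P :: "('r, nat) db set" and D D' :: "('r, nat) db"
  assumes "finite (rtypes \<sigma> ar d r)" and "\<forall>D\<in>C. is_db \<sigma> ar D \<and> deg_le D d" and "P \<subseteq> C"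
    and transfer: "\<forall>D\<in>P. \<forall>D'\<in>C.
           hist_dist \<sigma> ar d r D D' \<le> lam * real (min (card (dom D)) (card (dom D')))
           \<longrightarrow> close_to \<sigma> ar d \<epsilon> D' P"
    and "approx_scaling_closed (rtypes \<sigma> ar d r) c (hist \<sigma> ar r ` P)"
    and "0 < lam" and "lam \<le> 1"
    and "D \<in> C" and "far_from \<sigma> ar d \<epsilon> D P"
    and "D' \<in> P" and "0 < n_min" and "n_min \<le> card (dom D')" and "card (dom D') \<le> card (dom D)"
    and "8 * c \<le> lam * real n_min"
  shows "3 * lam / 8 < dv_dist \<sigma> ar d r D D'"
proof (rule ccontr)
  assume "\<not> 3 * lam / 8 < dv_dist \<sigma> ar d r D D'"
  have "0 < card (dom D')"
    using assms(11,12) by simp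
  have "lam * real n_min \<le> lam * real (card (dom D'))"
    using assms(6,12) by simp
  then have c_small: "8 * c \<le> lam * real (card (dom D'))"
    using assms(14) by linarith
  obtain D'' E where "D'' \<in> P" and "0 \<le> E"
    and E_le: "E \<le> real (card (dom D)) / real (card (dom D')) * c"
    and hist_dist_le: "hist_dist \<sigma> ar d r D'' D \<le> E + real (card (dom D)) * dv_dist \<sigma> ar d r D D'"
    and card_ge: "real (card (dom D)) - E \<le> real (min (card (dom D'')) (card (dom D)))"
    using exists_rescaled_member[OF assms(1,2,3,5,8,10) \<open>0 < card (dom D')\<close> assms(13)] by blast
  define N where "N = real (card (dom D))"
  have "0 \<le> N"
    unfolding N_def by simp
  have "real (card (dom D)) / real (card (dom D')) * c
      \<le> real (card (dom D)) / real (card (dom D')) * (lam * real (card (dom D')) / 8)"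
    using c_small by (intro mult_left_mono) simp_all
  also have "\<dots> = 1 / 8 * (lam * N)"
    using \<open>0 < card (dom D')\<close> unfolding N_def by (simp add: field_simps)
  finally have E_small: "E \<le> 1 / 8 * (lam * N)"
    using E_le by linarith
  have "N * dv_dist \<sigma> ar d r D D' \<le> N * (3 * lam / 8)"
    using \<open>\<not> 3 * lam / 8 < dv_dist \<sigma> ar d r D D'\<close> \<open>0 \<le> N\<close> by (intro mult_left_mono) simp_all
  also have "\<dots> = 3 / 8 * (lam * N)"
    by simp
  finally have "N * dv_dist \<sigma> ar d r D D' \<le> 3 / 8 * (lam * N)" .
  moreover have "lam * E \<le> E"
    using \<open>0 \<le> E\<close> \<open>0 < lam\<close> \<open>lam \<le> 1\<close> by (intro mult_left_le_one_le) auto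
  moreover have "0 \<le> lam * N"
    using \<open>0 < lam\<close> \<open>0 \<le> N\<close> by simp
  ultimately have "hist_dist \<sigma> ar d r D'' D \<le> lam * (N - E)"
    using hist_dist_le E_small unfolding N_def[symmetric] by (simp add: right_diff_distrib)
  also have "\<dots> \<le> lam * real (min (card (dom D'')) (card (dom D)))"
    using card_ge \<open>0 < lam\<close> unfolding N_def by (simp add: mult_left_mono)
  finally show False
    using transfer \<open>D'' \<in> P\<close> assms(8,9) unfolding far_from_def by blast
qed

theorem theorem9:
  fixes \<sigma> :: "'r set" and ar :: "'r \<Rightarrow> nat" and d r :: nat
    and C P :: "('r, nat) db set" and \<epsilon> lam :: real
  assumes "finite \<sigma>" and "\<forall>R\<in>\<sigma>. ar R \<ge> 1" and "d \<ge> 2"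
    and "\<forall>D\<in>C. is_db \<sigma> ar D \<and> deg_le D d"
    and "iso_closed \<sigma> ar C" and "closed_remove_tuples C"
    and "P \<subseteq> C" and "iso_closed \<sigma> ar P"
    and "hyperfinite_on P C"
    and "0 < \<epsilon>" and "\<epsilon> \<le> 1" and "0 < lam" and "lam \<le> 1"
    and "\<forall>D\<in>P. \<forall>D'\<in>C.
           hist_dist \<sigma> ar d r D D' \<le> lam * real (min (card (dom D)) (card (dom D')))
           \<longrightarrow> close_to \<sigma> ar d \<epsilon> D' P"
    and "semilinear (rtypes \<sigma> ar d r) (hist \<sigma> ar r ` P)"
  shows "\<exists>n_min n_max :: nat. \<exists>f \<mu> :: real. 0 < f \<and> f < 1 \<and> 0 < \<mu> \<and> \<mu> < 1 \<and>
     (\<forall>D\<in>C. card (dom D) > n_max \<longrightarrow>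
        (D \<in> P \<longrightarrow> (\<exists>D'\<in>P. n_min \<le> card (dom D') \<and> card (dom D') \<le> n_max \<and>
                              dv_dist \<sigma> ar d r D D' \<le> f - \<mu>)) \<and>
        (far_from \<sigma> ar d \<epsilon> D P \<longrightarrow> (\<forall>D'\<in>P. n_min \<le> card (dom D') \<and> card (dom D') \<le> n_max \<longrightarrow>
                              dv_dist \<sigma> ar d r D D' > f + \<mu>)))"
proof (cases "finite (rtypes \<sigma> ar d r)")
  case False
  \<comment> \<open>Impossible for a finite schema and bounded degree, but cheaper to dispatch than to
    refute: every l1-sum over the r-types is then 0.\<close>
  then have dv_dist_zero: "dv_dist \<sigma> ar d r D D' = 0" for D D' :: "('r, nat) db"
    unfolding dv_dist_def by simp
  have not_far: "\<not> far_from \<sigma> ar d \<epsilon> D P" if "D \<in> C" and "P \<noteq> {}" for D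
    using False assms(12,14) that unfolding hist_dist_def far_from_def by auto
  define n_max where "n_max = (if P = {} then 0 else card (dom (SOME D. D \<in> P)))"
  show ?thesis
    by (rule exI[of _ 0], rule exI[of _ n_max], rule exI[of _ "lam / 4"], rule exI[of _ "lam / 8"])
      (use assms(12,13) in \<open>auto simp: n_max_def dv_dist_zero not_far some_in_eq\<close>)
next
  case True
  obtain c where scaling: "approx_scaling_closed (rtypes \<sigma> ar d r) c (hist \<sigma> ar r ` P)"
    using semilinear_approx_scaling_closed assms(15) by blast
  define n_min where "n_min = nat \<lceil>8 * c / lam\<rceil> + 1"
  have "8 * c / lam \<le> real n_min"
    using real_nat_ceiling_ge[of "8 * c / lam"] unfolding n_min_def by simp
  then have n_min_large: "8 * c \<le> lam * real n_min"
    using assms(12) by (simp add: pos_divide_le_eq mult.commute)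
  have "0 < n_min" and "0 < lam / 8" and "\<forall>D\<in>P. finite (dom D)"
    using assms(4,7,12) unfolding n_min_def is_db_def by auto
  then obtain n_max where "n_min \<le> n_max" and net: "\<And>D. D \<in> P \<Longrightarrow> n_min \<le> card (dom D) \<Longrightarrow>
      \<exists>D'\<in>P. n_min \<le> card (dom D') \<and> card (dom D') \<le> n_max \<and> dv_dist \<sigma> ar d r D D' \<le> lam / 8"
    using dv_dist_net_of_bounded_size[OF True] by metis
  show ?thesis
    by (rule exI[of _ n_min], rule exI[of _ n_max], rule exI[of _ "lam / 4"], rule exI[of _ "lam / 8"])
      (use assms(12,13) \<open>n_min \<le> n_max\<close> net
        dv_dist_gt_if_far[OF True assms(4,7,14) scaling assms(12,13) _ _ _ \<open>0 < n_min\<close> _ _ n_min_large]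
        in \<open>fastforce\<close>)
qed

end
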